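(* Let $n\ge6$ and $m\ge2$. The unique set family of shape $(m^n)$ and type $(m+n-4,\ m+2,\ m+2,\ (m-1)^{n-6},\ (m-2)^3)$ is $\{1,2,\dots,m-2,m+1,m+2\}^{\preceq}\cup\{1,2,\dots,m-2,m-1,m+n-4\}^{\preceq}$. This type is not of the form $(m^n)\star\nu$ for any partition $\nu$ of $n-1$ with at most $m$ parts.
   Context: Majorization: for $m$-subsets $X=\{x_1<\dots<x_m\}$, $Y=\{y_1<\dots<y_m\}$ of $\mathbf{N}$, $X\preceq Y$ if $x_i\le y_i$ for all $i$. For an $m$-subset $A$, the downset $A^{\preceq}$ is the set of all $m$-subsets $X$ of $\mathbf{N}$ with $X\preceq A$. A set family of shape $(m^n)$ is a collection of $n$ distinct $m$-subsets of $\mathbf{N}$; it has type $\lambda$ (largest part $a$, conjugate $\lambda'$) if for each $i\in\{1,\dots,a\}$ exactly $\lambda'_i$ of its sets contain $i$. In the partition above, exponents denote repeated parts, and parts equal to $0$ (when $m=2$) are omitted. For a partition $\nu$ of $n-1$ with $k\le m$ parts, $(m^n)\star\nu$ is the partition obtained from the Young diagram of $(m^n)$ by, for each $1\le i\le k$, deleting $\nu_i$ boxes (from the bottom) of column $m+1-i$ and adding $\nu_i$ boxes to row $i$. *)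

theory Defs
  imports Main "HOL-Library.Multiset"
begin

text \<open>Here \<open>\<nat>\<close> is the set of positive integers: an m-subset is a finite set of
  positive naturals with exactly m elements.\<close>
definition msubset :: "nat \<Rightarrow> nat set \<Rightarrow> bool" where
  "msubset m X \<longleftrightarrow> finite X \<and> card X = m \<and> 0 \<notin> X"

definition majorized :: "nat set \<Rightarrow> nat set \<Rightarrow> bool" where
  "majorized X Y \<longleftrightarrow> finite X \<and> finite Y \<and> card X = card Y \<and>
     (\<forall>i < card X. sorted_list_of_set X ! i \<le> sorted_list_of_set Y ! i)"

definition downset :: "nat \<Rightarrow> nat set \<Rightarrow> nat set set" where
  "downset m A = {X. msubset m X \<and> majorized X A}"

definition family_of_shape :: "nat \<Rightarrow> nat \<Rightarrow> nat set set \<Rightarrow> bool" where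
  "family_of_shape m n F \<longleftrightarrow> finite F \<and> card F = n \<and> (\<forall>S\<in>F. msubset m S)"

definition is_partition :: "nat list \<Rightarrow> bool" where
  "is_partition lam \<longleftrightarrow> sorted_wrt (\<ge>) lam \<and> (\<forall>p\<in>set lam. 0 < p)"

definition conj_part :: "nat list \<Rightarrow> nat \<Rightarrow> nat" where
  "conj_part lam i = length (filter (\<lambda>p. i \<le> p) lam)"

definition largest_part :: "nat list \<Rightarrow> nat" where
  "largest_part lam = (if lam = [] then 0 else Max (set lam))"

definition has_type :: "nat set set \<Rightarrow> nat list \<Rightarrow> bool" where
  "has_type F lam \<longleftrightarrow> (\<forall>i\<in>{1..largest_part lam}. card {S\<in>F. i \<in> S} = conj_part lam i)"

text \<open>(m^n) \<star> nu, as the list of row lengths of rows 1..n (rows may become 0).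
  Row r loses one box in column m+1-i iff r is among the bottom nu_i rows,
  i.e. r > n - nu_i; row i (i \<le> k) gains nu_i boxes.\<close>
definition star :: "nat \<Rightarrow> nat \<Rightarrow> nat list \<Rightarrow> nat list" where
  "star m n nu = map (\<lambda>r. m - card {i\<in>{1..length nu}. n - nu ! (i - 1) < r}
                        + (if r \<le> length nu then nu ! (r - 1) else 0)) [1..<n+1]"

definition same_partition :: "nat list \<Rightarrow> nat list \<Rightarrow> bool" where
  "same_partition a b \<longleftrightarrow> mset (filter (\<lambda>p. 0 < p) a) = mset (filter (\<lambda>p. 0 < p) b)"

definition the_type :: "nat \<Rightarrow> nat \<Rightarrow> nat list" where
  "the_type m n = filter (\<lambda>p. 0 < p)
     ([m + n - 4, m + 2, m + 2] @ replicate (n - 6) (m - 1) @ replicate 3 (m - 2))"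

end

theory Submission
  imports Defs
begin

text \<open>
  Every set of such a family contains \<open>1, \<dots>, m-2\<close>, as these elements lie in all
  \<open>n\<close> sets. The parts of the type add up to \<open>mn\<close>, the total size of the family, so no set
  meets anything beyond \<open>m+n-4\<close>: each set is \<open>{1..m-2}\<close> plus two elements of
  \<open>{m-1..m+n-4}\<close>. Exactly \<open>n-3\<close> sets contain \<open>m-1\<close>, and there are only \<open>n-3\<close>
  candidates \<open>{1..m-1} \<union> {w}\<close> (the "fan"); these use up the single occurrences of
  \<open>m+3, \<dots>, m+n-4\<close>. So the other three sets add to \<open>{1..m-2}\<close> a pair from
  \<open>{m, m+1, m+2}\<close>, and there are exactly three such sets (the "triangle").
  Fan and triangle together are the union of the two downsets.

  For the second claim: if \<open>|\<nu>| < n\<close>, no box is removed from the first \<open>\<ell>(\<nu>)\<close>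
  rows of \<open>(m\<^sup>n) \<star> \<nu>\<close>, and all other rows have length at most \<open>m\<close>; so the rows
  longer than \<open>m\<close> are exactly the \<open>m + \<nu>\<^sub>i\<close>. The type has three such rows, of total
  length \<open>3m + n\<close>, while three rows \<open>m + \<nu>\<^sub>i\<close> have total length \<open>3m + n - 1\<close>.
\<close>

lemma sorted_wrt_less_nth_gt_index:
  assumes "sorted_wrt (<) xs" "\<forall>x\<in>set xs. (0::nat) < x" "i < length xs"
  shows "i < xs ! i"
  using assms(3)
proof (induction i)
  case 0 then show ?case using assms(2) by simp
next
  case (Suc i)
  have "xs ! i < xs ! Suc i" using assms(1) Suc.prems by (simp add: sorted_wrt_iff_nth_less)
  then show ?case using Suc by simp
qed

lemma nth_plus_length_le_sum_list:
  assumes "\<forall>x\<in>set xs. (0::nat) < x" "j < length xs"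
  shows "xs ! j + (length xs - 1) \<le> sum_list xs"
proof -
  have "sum_list xs = xs ! j + (\<Sum>i\<in>{..<length xs} - {j}. xs ! i)"
    using assms(2) by (simp add: sum_list_sum_nth atLeast0LessThan sum.remove)
  moreover have "(\<Sum>i\<in>{..<length xs} - {j}. 1) \<le> (\<Sum>i\<in>{..<length xs} - {j}. xs ! i)"
    using assms by (intro sum_mono) (auto simp: Suc_le_eq)
  ultimately show ?thesis using assms(2) by simp
qed

lemma length_le_sum_list:
  assumes "\<forall>x\<in>set xs. (0::nat) < x"
  shows "length xs \<le> sum_list xs"
  using assms by (induction xs) auto

lemma card_2_subset_of_3:
  assumes "E \<subseteq> {a, b, c}" "card E = 2"
  shows "E = {a, b} \<or> E = {a, c} \<or> E = {b, c}"
  using assms by (auto simp: card_2_iff)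

lemma card_filter_eq_sum:
  assumes "finite A"
  shows "card {x\<in>A. P x} = (\<Sum>x\<in>A. if P x then 1 else 0)"
  using assms by (simp add: sum.If_cases Int_def)

lemma sum_card_Int_eq_sum_card_containing:
  assumes "finite F" "finite R"
  shows "(\<Sum>S\<in>F. card (S \<inter> R)) = (\<Sum>i\<in>R. card {S\<in>F. i \<in> S})"
proof -
  have "(\<Sum>S\<in>F. card (S \<inter> R)) = (\<Sum>S\<in>F. \<Sum>i\<in>R. if i \<in> S then 1 else 0)"
    using assms(2) by (intro sum.cong) (auto simp: sum.If_cases Int_commute)
  also have "\<dots> = (\<Sum>i\<in>R. \<Sum>S\<in>F. if i \<in> S then 1 else 0)" by (rule sum.swap)
  also have "\<dots> = (\<Sum>i\<in>R. card {S\<in>F. i \<in> S})"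
    using assms(1) by (intro sum.cong) (auto simp: sum.If_cases Int_def)
  finally show ?thesis .
qed

lemma card_filter_eq_card_imp:
  assumes "finite A" "card {x\<in>A. P x} = card A" "x \<in> A"
  shows "P x"
  using card_subset_eq[OF assms(1) _ assms(2)] assms(3) by blast

section \<open>Initial segments extended by two elements\<close>

lemma sorted_list_of_set_initial_Un_pair:
  assumes "k < x" "x < y"
  shows "sorted_list_of_set ({1..k} \<union> {x, y}) = [1..<k+1] @ [x, y]"
proof -
  have "set ([1..<k+1] @ [x, y]) = {1..k} \<union> {x, y}" by auto
  moreover have "sorted_wrt (<) ([1..<k+1] @ [x, y])" using assms by (auto simp: sorted_wrt_append)
  ultimately show ?thesis by (metis sorted_list_of_set.idem_if_sorted_distinct strict_sorted_iff)
qed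

lemma initial_Un_pair_eq_iff:
  fixes k :: nat
  assumes "k < x" "k < y" "k < x'" "k < y'"
  shows "{1..k} \<union> {x, y} = {1..k} \<union> {x', y'} \<longleftrightarrow> {x, y} = {x', y'}"
proof
  assume eq: "{1..k} \<union> {x, y} = {1..k} \<union> {x', y'}"
  have "{x, y} = ({1..k} \<union> {x, y}) - {1..k}" "{x', y'} = ({1..k} \<union> {x', y'}) - {1..k}"
    using assms by auto
  then show "{x, y} = {x', y'}" using eq by simp
qed simp

lemma card_initial_Un_pair:
  fixes k :: nat
  assumes "k < x" "k < y" "x \<noteq> y"
  shows "card ({1..k} \<union> {x, y}) = k + 2"
  using assms by (subst card_Un_disjoint) auto

lemma downset_initial_Un_pairE:
  fixes k :: nat
  assumes "k < p" "p < q" and "X \<in> downset (k + 2) ({1..k} \<union> {p, q})"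
  obtains x y where "X = {1..k} \<union> {x, y}" "k < x" "x < y" "x \<le> p" "y \<le> q"
proof -
  have X: "finite X" "card X = k + 2" "0 \<notin> X" and maj: "majorized X ({1..k} \<union> {p, q})"
    using assms(3) by (auto simp: downset_def msubset_def)
  define s where "s = sorted_list_of_set X"
  have s: "sorted_wrt (<) s" "length s = k + 2" "set s = X"
    using X by (simp_all add: s_def)
  have pos: "\<forall>x\<in>set s. 0 < x" using X(3) s(3) by (auto intro: gr0I)
  have le: "s ! i \<le> ([1..<k+1] @ [p, q]) ! i" if "i < k + 2" for i
    using maj that X(2) unfolding majorized_def s_def sorted_list_of_set_initial_Un_pair[OF assms(1,2)]
    by simp
  \<comment> \<open>Positive and strictly increasing, \<open>s\<close> is squeezed between \<open>1, \<dots>, k\<close> and \<open>1, \<dots>, k\<close>.\<close>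
  have initial: "s ! i = i + 1" if "i < k" for i
    using le[of i] sorted_wrt_less_nth_gt_index[OF s(1) pos, of i] that s(2)
    by (simp add: nth_append del: upt_Suc)
  have "s = [1..<k+1] @ [s ! k, s ! (k + 1)]"
  proof (rule nth_equalityI)
    fix i assume "i < length s"
    then consider "i < k" | "i = k" | "i = k + 1" using s(2) by linarith
    then show "s ! i = ([1..<k+1] @ [s ! k, s ! (k + 1)]) ! i"
      by cases (simp_all add: initial nth_append del: upt_Suc)
  qed (simp add: s(2))
  then have "X = {1..k} \<union> {s ! k, s ! (k + 1)}"
    using s(3) by (metis set_append set_upt atLeastLessThanSuc_atLeastAtMost Suc_eq_plus1
        list.set(1) list.set(2))
  moreover have "k < s ! k" "s ! k < s ! (k + 1)"
    using sorted_wrt_less_nth_gt_index[OF s(1) pos, of k] s(1,2)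
    by (auto simp: sorted_wrt_iff_nth_less)
  moreover have "s ! k \<le> p" "s ! (k + 1) \<le> q"
    using le[of k] le[of "k + 1"] by (simp_all add: nth_append del: upt_Suc)
  ultimately show ?thesis by (rule that)
qed

lemma downset_initial_Un_pair:
  fixes k :: nat
  assumes "k < p" "p < q"
  shows "downset (k + 2) ({1..k} \<union> {p, q}) =
    (\<lambda>(x, y). {1..k} \<union> {x, y}) ` {(x, y). k < x \<and> x < y \<and> x \<le> p \<and> y \<le> q}"
  (is "_ = ?f ` ?P")
proof (intro set_eqI iffI)
  fix X assume "X \<in> downset (k + 2) ({1..k} \<union> {p, q})"
  with assms obtain x y where "X = {1..k} \<union> {x, y}" "k < x" "x < y" "x \<le> p" "y \<le> q"
    by (rule downset_initial_Un_pairE)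
  then show "X \<in> ?f ` ?P" by (intro image_eqI[where x = "(x, y)"]) simp_all
next
  fix X assume "X \<in> ?f ` ?P"
  then obtain x y where X: "X = {1..k} \<union> {x, y}" and xy: "k < x" "x < y" and "x \<le> p" "y \<le> q"
    by auto
  have "card X = k + 2" using X xy by (simp add: card_initial_Un_pair)
  moreover have "sorted_list_of_set X ! i \<le> ([1..<k+1] @ [p, q]) ! i" if "i < k + 2" for i
    using that \<open>x \<le> p\<close> \<open>y \<le> q\<close> unfolding X sorted_list_of_set_initial_Un_pair[OF xy]
    by (auto simp: nth_append nth_Cons' simp del: upt_Suc)
  ultimately show "X \<in> downset (k + 2) ({1..k} \<union> {p, q})"
    using X xy assms unfolding downset_def msubset_def majorized_def
      sorted_list_of_set_initial_Un_pair[OF assms]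
    by (auto simp: card_initial_Un_pair)
qed

section \<open>The type and its conjugate\<close>

lemma conj_part_Cons: "conj_part (p # lam) i = (if i \<le> p then 1 else 0) + conj_part lam i"
  by (simp add: conj_part_def)

lemma sum_conj_part:
  assumes "\<forall>p\<in>set lam. p \<le> N"
  shows "(\<Sum>i=1..N. conj_part lam i) = sum_list lam"
  using assms
proof (induction lam)
  case Nil then show ?case by (simp add: conj_part_def)
next
  case (Cons p lam)
  have "{1..N} \<inter> {i. i \<le> p} = {1..p}" using Cons.prems by auto
  then have "(\<Sum>i=1..N. if i \<le> p then 1 else 0) = p" by (simp add: sum.If_cases)
  then show ?case using Cons by (simp add: conj_part_Cons sum.distrib)
qed

lemma the_type_parts_le:
  assumes "6 \<le> n"
  shows "\<forall>p\<in>set (the_type m n). p \<le> m + n - 4"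
  using assms by (auto simp: the_type_def)

lemma largest_part_the_type:
  assumes "6 \<le> n"
  shows "largest_part (the_type m n) = m + n - 4"
proof -
  have "m + n - 4 \<in> set (the_type m n)" using assms by (simp add: the_type_def)
  then show ?thesis using the_type_parts_le[OF assms]
    unfolding largest_part_def by (auto intro!: Max_eqI)
qed

lemma conj_part_the_type:
  assumes "6 \<le> n" "2 \<le> m" "1 \<le> i"
  shows "conj_part (the_type m n) i = (if i \<le> m - 2 then n else if i = m - 1 then n - 3
     else if i \<le> m + 2 then 3 else if i \<le> m + n - 4 then 1 else 0)"
proof -
  have "(\<lambda>p. i \<le> p \<and> 0 < p) = (\<le>) i" using assms(3) by auto
  then show ?thesis using assms
    unfolding conj_part_def the_type_def filter_filter by (auto simp: filter_replicate)
qed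

lemma conj_part_the_type_initial:
  assumes "6 \<le> n" "2 \<le> m" "i \<in> {1..m-2}"
  shows "conj_part (the_type m n) i = n"
  using assms conj_part_the_type[OF assms(1,2), of i] by simp

lemma conj_part_the_type_pred:
  assumes "6 \<le> n" "2 \<le> m"
  shows "conj_part (the_type m n) (m - 1) = n - 3"
proof -
  have "\<not> m - 1 \<le> m - 2" "1 \<le> m - 1" using assms(2) by arith+
  then show ?thesis using conj_part_the_type[OF assms, of "m - 1"] by simp
qed

lemma conj_part_the_type_long:
  assumes "6 \<le> n" "2 \<le> m" "i \<in> {m+3..m+n-4}"
  shows "conj_part (the_type m n) i = 1"
proof -
  have "\<not> i \<le> m - 2" "i \<noteq> m - 1" "\<not> i \<le> m + 2" "1 \<le> i" using assms(3) by auto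
  then show ?thesis using conj_part_the_type[OF assms(1,2), of i] assms(3) by simp
qed

lemma sum_list_the_type:
  assumes "6 \<le> n" "2 \<le> m"
  shows "sum_list (the_type m n) = m * n"
proof -
  obtain k l where "m = k + 2" "n = l + 6" using assms by (metis add.commute le_Suc_ex)
  then show ?thesis by (simp add: the_type_def filter_replicate sum_list_replicate algebra_simps)
qed

lemma the_type_parts_gt:
  assumes "4 < n"
  shows "filter ((<) m) (the_type m n) = [m + n - 4, m + 2, m + 2]"
  using assms by (auto simp: the_type_def filter_replicate)

section \<open>Rows of \<open>(m\<^sup>n) \<star> \<nu>\<close> longer than \<open>m\<close>\<close>

lemma length_star [simp]: "length (star m n nu) = n"
  by (simp add: star_def)

text \<open>\<open>star m n nu ! j\<close> is the length of row \<open>j + 1\<close> of the diagram.\<close>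

lemma nth_star:
  assumes "j < n"
  shows "star m n nu ! j =
    m - card {i\<in>{1..length nu}. n - nu ! (i - 1) \<le> j} + (if j < length nu then nu ! j else 0)"
proof -
  have "{i\<in>{1..length nu}. n - nu ! (i - 1) < Suc j} =
      {i\<in>{1..length nu}. n - nu ! (i - 1) \<le> j}"
    by (simp add: less_Suc_eq_le)
  then show ?thesis using assms by (simp add: star_def nth_map_upt del: upt_Suc)
qed

lemma nth_star_below:
  assumes pos: "\<forall>p\<in>set nu. 0 < p" and small: "sum_list nu < n" and j: "j < length nu"
  shows "star m n nu ! j = m + nu ! j"
proof -
  have "\<not> n - nu ! (i - 1) \<le> j" if "i \<in> {1..length nu}" for i
  proof -
    have "nu ! (i - 1) + (length nu - 1) \<le> sum_list nu"
      using that by (intro nth_plus_length_le_sum_list pos) auto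
    then show ?thesis using small j by linarith
  qed
  then have no_deletion: "{i\<in>{1..length nu}. n - nu ! (i - 1) \<le> j} = {}" by blast
  have "j < n" using length_le_sum_list[OF pos] small j by linarith
  then show ?thesis unfolding nth_star[OF \<open>j < n\<close>] no_deletion using j by simp
qed

lemma nth_star_above:
  assumes "length nu \<le> j" "j < n"
  shows "star m n nu ! j \<le> m"
  using assms by (simp add: nth_star)

lemma star_parts_gt:
  assumes pos: "\<forall>p\<in>set nu. 0 < p" and small: "sum_list nu < n"
  shows "filter ((<) m) (star m n nu) = map ((+) m) nu"
proof -
  let ?k = "length nu"
  have k_le: "?k \<le> n" using length_le_sum_list[OF pos] small by linarith
  have "take ?k (star m n nu) = map ((+) m) nu"
    using k_le by (intro nth_equalityI) (simp_all add: nth_star_below[OF pos small])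
  moreover have "\<forall>x\<in>set (drop ?k (star m n nu)). x \<le> m"
    by (auto simp: in_set_conv_nth nth_star_above)
  ultimately have
    "filter ((<) m) (take ?k (star m n nu) @ drop ?k (star m n nu)) = map ((+) m) nu"
    using pos by (auto simp: filter_empty_conv intro: filter_True)
  then show ?thesis by simp
qed

lemma the_type_not_star:
  assumes "4 < n" "\<forall>p\<in>set nu. 0 < p" "sum_list nu = n - 1"
  shows "\<not> same_partition (the_type m n) (star m n nu)"
proof
  assume "same_partition (the_type m n) (star m n nu)"
  then have "mset (filter ((<) m) (filter ((<) 0) (the_type m n))) =
             mset (filter ((<) m) (filter ((<) 0) (star m n nu)))"
    unfolding same_partition_def by (metis mset_filter)
  moreover have "(\<lambda>p. 0 < p \<and> m < p) = (<) m" by auto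
  ultimately have eq: "mset [m + n - 4, m + 2, m + 2] = mset (map ((+) m) nu)"
    using assms by (simp add: filter_filter the_type_parts_gt star_parts_gt)
  have "length nu = 3" using arg_cong[OF eq, of size] by simp
  moreover have "sum_list [m + n - 4, m + 2, m + 2] = sum_list (map ((+) m) nu)"
    unfolding sum_mset_sum_list[symmetric] eq ..
  ultimately show False using assms by (simp add: sum_list_addf sum_list_triv)
qed

section \<open>The family of the type\<close>

definition fan :: "nat \<Rightarrow> nat \<Rightarrow> nat set set" where
  "fan m n = (\<lambda>w. {1..m-2} \<union> {m - 1, w}) ` {m..m+n-4}"

definition triangle :: "nat \<Rightarrow> nat set set" where
  "triangle m = (\<lambda>(x, y). {1..m-2} \<union> {x, y}) ` {(m, m + 1), (m, m + 2), (m + 1, m + 2)}"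

lemma fan_eq_image: "fan m n = (\<lambda>(x, y). {1..m-2} \<union> {x, y}) ` Pair (m - 1) ` {m..m+n-4}"
  unfolding fan_def image_image by (simp only: case_prod_conv)

lemma triangle_explicit:
  "triangle m = {{1..m-2} \<union> {m, m + 1}, {1..m-2} \<union> {m, m + 2}, {1..m-2} \<union> {m + 1, m + 2}}"
  by (simp add: triangle_def)

lemma triangle_eq_image:
  "triangle m = (\<lambda>E. {1..m-2} \<union> E) ` {{m, m + 1}, {m, m + 2}, {m + 1, m + 2}}"
  by (simp add: triangle_def)

lemma finite_triangle: "finite (triangle m)"
  by (simp add: triangle_def)

locale exceptional_type =
  fixes m n :: nat
  assumes n6: "6 \<le> n" and m2: "2 \<le> m"
begin

text \<open>Writing \<open>m = k + 2\<close> removes the truncated subtractions \<open>m - 2\<close> and \<open>m - 1\<close>,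
  which the arithmetic of the simplifier does not see through.\<close>

lemma m_plus_2_cases: obtains k where "m = k + 2"
  using m2 by (metis add.commute le_Suc_ex)

lemma downset_eq_image:
  assumes "m - 2 < p" "p < q"
  shows "downset m ({1..m-2} \<union> {p, q}) =
    (\<lambda>(x, y). {1..m-2} \<union> {x, y}) ` {(x, y). m - 2 < x \<and> x < y \<and> x \<le> p \<and> y \<le> q}"
proof -
  have "m - 2 + 2 = m" using m2 by simp
  then show ?thesis using downset_initial_Un_pair[OF assms] by (simp only:)
qed

lemma downset_eq_fan: "downset m ({1..m-1} \<union> {m+n-4}) = fan m n"
proof -
  have "{1..m-1} \<union> {m+n-4} = {1..m-2} \<union> {m - 1, m+n-4}" using m2 by auto
  moreover have "{(x, y). m - 2 < x \<and> x < y \<and> x \<le> m - 1 \<and> y \<le> m + n - 4} =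
      Pair (m - 1) ` {m..m+n-4}"
    by (rule m_plus_2_cases) auto
  moreover have "m - 2 < m - 1" "m - 1 < m + n - 4" using m2 n6 by auto
  ultimately show ?thesis unfolding fan_eq_image by (simp only: downset_eq_image)
qed

lemma pairs_below_triangle_top:
  "{(x, y). m - 2 < x \<and> x < y \<and> x \<le> m + 1 \<and> y \<le> m + 2} =
    Pair (m - 1) ` {m..m+2} \<union> {(m, m + 1), (m, m + 2), (m + 1, m + 2)}"
  by (rule m_plus_2_cases) auto

lemma downset_triangle_top:
  "downset m ({1..m-2} \<union> {m+1, m+2}) =
    (\<lambda>(x, y). {1..m-2} \<union> {x, y}) ` Pair (m - 1) ` {m..m+2} \<union> triangle m"
proof -
  have "m - 2 < m + 1" "m + 1 < m + 2" by simp_all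
  then show ?thesis
    unfolding triangle_def by (simp only: downset_eq_image pairs_below_triangle_top image_Un)
qed

lemma short_fan_subset_fan:
  "(\<lambda>(x, y). {1..m-2} \<union> {x, y}) ` Pair (m - 1) ` {m..m+2} \<subseteq> fan m n"
  using n6 unfolding fan_eq_image by (intro image_mono) auto

lemma downsets_eq_fan_Un_triangle:
  "downset m ({1..m-2} \<union> {m+1, m+2}) \<union> downset m ({1..m-1} \<union> {m+n-4}) = fan m n \<union> triangle m"
  unfolding downset_eq_fan downset_triangle_top using short_fan_subset_fan by blast

lemma inj_on_fan: "inj_on (\<lambda>w. {1..m-2} \<union> {m - 1, w}) {m..m+n-4}"
proof (rule inj_onI)
  fix w w' assume w: "w \<in> {m..m+n-4}" "w' \<in> {m..m+n-4}"
    and eq: "{1..m-2} \<union> {m - 1, w} = {1..m-2} \<union> {m - 1, w'}"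
  have "{m - 1, w} = {m - 1, w'}"
    using eq w m2 by (subst (asm) initial_Un_pair_eq_iff) auto
  then show "w = w'" using w m2 by (auto simp: doubleton_eq_iff)
qed

lemma card_fan: "card (fan m n) = n - 3"
  using card_image[OF inj_on_fan] n6 by (simp add: fan_def)

lemma triangle_distinct:
  "{1..m-2} \<union> {m, m + 1} \<noteq> {1..m-2} \<union> {m, m + 2}"
  "{1..m-2} \<union> {m, m + 1} \<noteq> {1..m-2} \<union> {m + 1, m + 2}"
  "{1..m-2} \<union> {m, m + 2} \<noteq> {1..m-2} \<union> {m + 1, m + 2}"
proof -
  have neq: "{1..m-2} \<union> {x, y} \<noteq> {1..m-2} \<union> {x', y'}"
    if "m \<le> x" "x < y" "m \<le> x'" "x' < y'" "(x, y) \<noteq> (x', y')" for x y x' y'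
  proof -
    have gt: "m - 2 < z" if "m \<le> z" for z using that m2 by linarith
    show ?thesis using that
      by (subst initial_Un_pair_eq_iff) (auto simp: doubleton_eq_iff intro: gt)
  qed
  show "{1..m-2} \<union> {m, m + 1} \<noteq> {1..m-2} \<union> {m, m + 2}" by (rule neq) simp_all
  show "{1..m-2} \<union> {m, m + 1} \<noteq> {1..m-2} \<union> {m + 1, m + 2}" by (rule neq) simp_all
  show "{1..m-2} \<union> {m, m + 2} \<noteq> {1..m-2} \<union> {m + 1, m + 2}" by (rule neq) simp_all
qed

lemma card_triangle: "card (triangle m) = 3"
  using triangle_distinct unfolding triangle_explicit by simp

lemma fan_triangle_disjoint: "fan m n \<inter> triangle m = {}"
proof -
  have "m - 1 \<in> S" if "S \<in> fan m n" for S using that by (auto simp: fan_def)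
  moreover have "m - 1 \<notin> S" if "S \<in> triangle m" for S using that m2 by (auto simp: triangle_explicit)
  ultimately show ?thesis by blast
qed

lemma card_fan_Un_triangle: "card (fan m n \<union> triangle m) = n"
  using card_fan card_triangle fan_triangle_disjoint n6
  by (subst card_Un_disjoint) (auto simp: fan_def triangle_explicit)

lemma msubset_of_fan_Un_triangle: "S \<in> fan m n \<union> triangle m \<Longrightarrow> msubset m S"
  unfolding downsets_eq_fan_Un_triangle[symmetric] downset_def by blast

lemma degree_fan:
  assumes "1 \<le> i"
  shows "card {S\<in>fan m n. i \<in> S} =
    (if i \<le> m - 1 then n - 3 else if i \<le> m + n - 4 then 1 else 0)"
proof -
  have "card {S\<in>fan m n. i \<in> S} =
      (\<Sum>w\<in>{m..m+n-4}. if i \<in> {1..m-2} \<union> {m - 1, w} then 1 else 0)"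
    unfolding card_filter_eq_sum[OF finite_imageI[OF finite_atLeastAtMost]] fan_def
    by (simp only: sum.reindex[OF inj_on_fan] comp_def)
  also have "\<dots> = (if i \<le> m - 1 then n - 3 else if i \<le> m + n - 4 then 1 else 0)"
  proof (cases "i \<le> m - 1")
    case True
    then have "i \<in> {1..m-2} \<union> {m - 1, w}" for w using assms by auto
    then show ?thesis using True n6 by simp
  next
    case False
    then have "i \<in> {1..m-2} \<union> {m - 1, w} \<longleftrightarrow> w = i" for w by auto
    then show ?thesis using False by simp
  qed
  finally show ?thesis .
qed

lemma degree_triangle:
  assumes "1 \<le> i"
  shows "card {S\<in>triangle m. i \<in> S} =
    (if i \<le> m - 2 then 3 else if m \<le> i \<and> i \<le> m + 2 then 2 else 0)"
proof -
  have "card {S\<in>triangle m. i \<in> S} =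
      (if i \<in> {1..m-2} \<union> {m, m + 1} then 1 else 0) +
      (if i \<in> {1..m-2} \<union> {m, m + 2} then 1 else 0) +
      (if i \<in> {1..m-2} \<union> {m + 1, m + 2} then 1 else 0)"
    unfolding card_filter_eq_sum[OF finite_triangle] unfolding triangle_explicit
    using triangle_distinct by simp
  then show ?thesis using assms m2 by auto
qed

lemma degree_fan_Un_triangle:
  assumes "1 \<le> i"
  shows "card {S\<in>fan m n \<union> triangle m. i \<in> S} = conj_part (the_type m n) i"
proof -
  have "{S\<in>fan m n \<union> triangle m. i \<in> S} = {S\<in>fan m n. i \<in> S} \<union> {S\<in>triangle m. i \<in> S}"
    by blast
  then have "card {S\<in>fan m n \<union> triangle m. i \<in> S} =
      card {S\<in>fan m n. i \<in> S} + card {S\<in>triangle m. i \<in> S}"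
    using fan_triangle_disjoint finite_triangle by (simp add: card_Un_disjoint fan_def disjoint_iff)
  then show ?thesis
    unfolding degree_fan[OF assms] degree_triangle[OF assms] conj_part_the_type[OF n6 m2 assms]
    using m2 n6 by auto
qed

lemma fan_Un_triangle_has_the_type:
  "family_of_shape m n (fan m n \<union> triangle m) \<and> has_type (fan m n \<union> triangle m) (the_type m n)"
  using card_fan_Un_triangle msubset_of_fan_Un_triangle degree_fan_Un_triangle finite_triangle
  by (auto simp: family_of_shape_def has_type_def fan_def)

end

locale exceptional_family = exceptional_type +
  fixes F :: "nat set set"
  assumes shape: "family_of_shape m n F" and type: "has_type F (the_type m n)"
begin

lemma finite_F: "finite F" and card_F: "card F = n"
  and finite_member: "S \<in> F \<Longrightarrow> finite S" and card_member: "S \<in> F \<Longrightarrow> card S = m"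
  using shape by (auto simp: family_of_shape_def msubset_def)

lemma degree_eq_conj_part:
  "i \<in> {1..m+n-4} \<Longrightarrow> card {S\<in>F. i \<in> S} = conj_part (the_type m n) i"
  using type unfolding has_type_def largest_part_the_type[OF n6] by blast

lemma initial_subset: "S \<in> F \<Longrightarrow> {1..m-2} \<subseteq> S"
proof
  fix i assume S: "S \<in> F" and i: "i \<in> {1..m-2}"
  then have "card {S\<in>F. i \<in> S} = conj_part (the_type m n) i"
    using n6 by (intro degree_eq_conj_part) auto
  also have "\<dots> = card F" using conj_part_the_type_initial[OF n6 m2 i] card_F by simp
  finally show "i \<in> S" by (rule card_filter_eq_card_imp[OF finite_F _ S])
qed

lemma subset_range: "S \<in> F \<Longrightarrow> S \<subseteq> {1..m+n-4}"
proof -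
  let ?R = "{1..m+n-4}"
  assume S: "S \<in> F"
  have "(\<Sum>S\<in>F. card (S \<inter> ?R)) = (\<Sum>i\<in>?R. card {S\<in>F. i \<in> S})"
    using finite_F by (rule sum_card_Int_eq_sum_card_containing) simp
  also have "\<dots> = (\<Sum>i\<in>?R. conj_part (the_type m n) i)"
    by (rule sum.cong) (simp_all add: degree_eq_conj_part)
  also have "\<dots> = sum_list (the_type m n)" by (rule sum_conj_part[OF the_type_parts_le[OF n6]])
  also have "\<dots> = (\<Sum>S\<in>F. card S)" using sum_list_the_type[OF n6 m2] card_member card_F by simp
  finally have total: "(\<Sum>S\<in>F. card (S \<inter> ?R)) = (\<Sum>S\<in>F. card S)" .
  have "card (S \<inter> ?R) = card S"
    by (rule sum_mono_inv[OF total _ S finite_F]) (simp add: card_mono finite_member)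
  then have "S \<inter> ?R = S" by (intro card_subset_eq finite_member S) auto
  then show ?thesis by blast
qed

lemma card_tail: "S \<in> F \<Longrightarrow> card (S - {1..m-2}) = 2"
  using initial_subset card_member m2 by (simp add: card_Diff_subset)

lemma tail_subset_range: "S \<in> F \<Longrightarrow> S - {1..m-2} \<subseteq> {m-1..m+n-4}"
  using subset_range m2 by fastforce

lemma tail_of_member_containing_pred:
  assumes S: "S \<in> F" "m - 1 \<in> S"
  obtains w where "S - {1..m-2} = {m - 1, w}" "w \<in> {m..m+n-4}"
proof -
  let ?E = "S - {1..m-2}"
  have "m - 1 \<notin> {1..m-2}" using m2 by (simp add: not_le)
  then have E: "m - 1 \<in> ?E" using S(2) by (rule DiffI[rotated])
  then have "card (?E - {m - 1}) = 1" using card_tail[OF S(1)] by simp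
  then obtain w where w: "?E - {m - 1} = {w}" by (rule card_1_singletonE)
  then have "?E = {m - 1, w}" using insert_Diff[OF E] by simp
  moreover have "w \<in> {m..m+n-4}"
  proof -
    have "w \<in> {m-1..m+n-4}" "w \<noteq> m - 1" using w tail_subset_range[OF S(1)] by auto
    then show ?thesis by (simp add: le_eq_less_or_eq) arith
  qed
  ultimately show ?thesis by (rule that)
qed

lemma member_eq_initial_Un_tail: "S \<in> F \<Longrightarrow> S = {1..m-2} \<union> (S - {1..m-2})"
  using initial_subset by blast

lemma members_containing_eq_fan: "{S\<in>F. m - 1 \<in> S} = fan m n"
proof -
  have "{S\<in>F. m - 1 \<in> S} \<subseteq> fan m n"
  proof
    fix S assume "S \<in> {S\<in>F. m - 1 \<in> S}"
    then have S: "S \<in> F" "m - 1 \<in> S" by auto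
    then obtain w where E: "S - {1..m-2} = {m - 1, w}" and w: "w \<in> {m..m+n-4}"
      by (rule tail_of_member_containing_pred)
    have "S = {1..m-2} \<union> {m - 1, w}" using member_eq_initial_Un_tail[OF S(1)] unfolding E .
    with w show "S \<in> fan m n" unfolding fan_def by (rule rev_image_eqI)
  qed
  moreover have "card {S\<in>F. m - 1 \<in> S} = card (fan m n)"
  proof -
    have "1 \<le> m - 1" "m - 1 \<le> m + n - 4" using m2 n6 by arith+
    then have "card {S\<in>F. m - 1 \<in> S} = conj_part (the_type m n) (m - 1)"
      by (intro degree_eq_conj_part) simp
    also have "\<dots> = n - 3" using conj_part_the_type_pred[OF n6 m2] .
    finally show ?thesis using card_fan by simp
  qed
  ultimately show ?thesis using finite_F by (intro card_subset_eq) (simp_all add: fan_def)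
qed

lemma fan_subset: "fan m n \<subseteq> F"
  unfolding members_containing_eq_fan[symmetric] by blast

lemma long_element_notin_non_fan:
  assumes S: "S \<in> F" "S \<notin> fan m n" and w: "w \<in> {m+3..m+n-4}"
  shows "w \<notin> S"
proof
  assume "w \<in> S"
  have "w \<in> {1..m+n-4}" using w by simp
  then have "card {S\<in>F. w \<in> S} = conj_part (the_type m n) w" by (rule degree_eq_conj_part)
  also have "\<dots> = 1" using conj_part_the_type_long[OF n6 m2 w] .
  finally obtain X where X: "{S\<in>F. w \<in> S} = {X}" by (rule card_1_singletonE)
  have "w \<in> {m..m+n-4}" using w by simp
  then have T: "{1..m-2} \<union> {m - 1, w} \<in> fan m n" unfolding fan_def by (rule imageI)
  then have "{1..m-2} \<union> {m - 1, w} \<in> {S\<in>F. w \<in> S}" using fan_subset by auto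
  moreover have "S \<in> {S\<in>F. w \<in> S}" using S(1) \<open>w \<in> S\<close> by simp
  ultimately have "S = {1..m-2} \<union> {m - 1, w}" unfolding X by simp
  then show False using S(2) T by simp
qed

lemma tail_of_non_fan_subset:
  assumes S: "S \<in> F" "S \<notin> fan m n"
  shows "S - {1..m-2} \<subseteq> {m..m+2}"
proof
  fix x assume x: "x \<in> S - {1..m-2}"
  have "m - 1 \<notin> S"
  proof
    assume "m - 1 \<in> S"
    then have "S \<in> {S\<in>F. m - 1 \<in> S}" using S(1) by simp
    then show False using S(2) unfolding members_containing_eq_fan by simp
  qed
  have "x \<in> {m-1..m+n-4}" using x tail_subset_range[OF S(1)] by auto
  moreover have "x \<noteq> m - 1" using x \<open>m - 1 \<notin> S\<close> by auto
  moreover have "x \<notin> {m+3..m+n-4}" using long_element_notin_non_fan[OF S] x by auto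
  ultimately show "x \<in> {m..m+2}" by simp arith
qed

lemma diff_fan_eq_triangle: "F - fan m n = triangle m"
proof -
  have "F - fan m n \<subseteq> triangle m"
  proof
    fix S assume "S \<in> F - fan m n"
    then have S: "S \<in> F" "S \<notin> fan m n" by simp_all
    have "{m..m+2} = {m, m + 1, m + 2}" by auto
    then have "S - {1..m-2} \<subseteq> {m, m + 1, m + 2}" using tail_of_non_fan_subset[OF S] by simp
    then have "S - {1..m-2} = {m, m + 1} \<or> S - {1..m-2} = {m, m + 2} \<or>
        S - {1..m-2} = {m + 1, m + 2}"
      using card_tail[OF S(1)] by (rule card_2_subset_of_3)
    then have "S - {1..m-2} \<in> {{m, m + 1}, {m, m + 2}, {m + 1, m + 2}}" by simp
    then show "S \<in> triangle m"
      unfolding triangle_eq_image using member_eq_initial_Un_tail[OF S(1)] by (rule rev_image_eqI)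
  qed
  moreover have "card (F - fan m n) = card (triangle m)"
    using fan_subset card_F card_fan card_triangle n6 by (simp add: card_Diff_subset fan_def)
  ultimately show ?thesis using finite_triangle by (intro card_subset_eq) simp_all
qed

lemma family_eq: "F = fan m n \<union> triangle m"
  using fan_subset diff_fan_eq_triangle by blast

end

lemma (in exceptional_type) shape_and_type_iff:
  "family_of_shape m n F \<and> has_type F (the_type m n) \<longleftrightarrow> F = fan m n \<union> triangle m"
proof
  assume "family_of_shape m n F \<and> has_type F (the_type m n)"
  then interpret exceptional_family m n F by unfold_locales blast+
  show "F = fan m n \<union> triangle m" by (rule family_eq)
qed (simp add: fan_Un_triangle_has_the_type)

theorem lemma5p6:
  fixes m n :: nat
  assumes "n \<ge> 6" and "m \<ge> 2"
  shows "(\<forall>F. (family_of_shape m n F \<and> has_type F (the_type m n)) \<longleftrightarrow>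
            F = downset m ({1..m-2} \<union> {m+1, m+2}) \<union> downset m ({1..m-1} \<union> {m+n-4}))
         \<and> \<not> (\<exists>nu. is_partition nu \<and> sum_list nu = n - 1 \<and> length nu \<le> m \<and>
                  same_partition (the_type m n) (star m n nu))"
proof -
  interpret exceptional_type m n using assms by unfold_locales
  have "\<not> same_partition (the_type m n) (star m n nu)"
    if "is_partition nu" "sum_list nu = n - 1" for nu
    using that assms by (intro the_type_not_star) (auto simp: is_partition_def)
  then show ?thesis using shape_and_type_iff unfolding downsets_eq_fan_Un_triangle by blast
qed

end
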